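(* For $\alpha,\beta,\gamma>0$ and $n\ge2$, $$Z_n^{\mathcal{GS}}=\sum_{\theta\in\{0,1\}^2}C_\theta\det(K_\theta),\qquad C_\theta=\tfrac12(-1)^{(\theta_1+n+1)(\theta_2+n+1)}.$$
   Context: $\mathbb{T}_n=(\mathbb{Z}/n\mathbb{Z})^2$, $e^1=(1,0)$, $e^2=(0,1)$, $e^3=\frac12(e^1+e^2)$; mid-edges $\mathbb{M}_n$ = black $\{v+\frac12e^1:v\in\mathbb{T}_n\}$ ⊔ white $\{v+\frac12e^2:v\in\mathbb{T}_n\}$, coordinates mod $n$. A generalised snake configuration is a permutation $\bar\rho$ of $\mathbb{M}_n$ with $\bar\rho(x)\in\{x,x+e^3,x+e^1\}$ ($x$ black), $\bar\rho(x)\in\{x,x+e^3,x+e^2\}$ ($x$ white); $\mathcal{GS}_n$ their set. $S(\bar\rho)$ = number of vertices $v$ with $\bar\rho(v-\frac12e^1)=v+\frac12e^1$ and $\bar\rho(v-\frac12e^2)=v+\frac12e^2$ (crossings); $A,B,C$ = numbers of $x$ with $\bar\rho(x)=x+e^1$, $x+e^2$, $x+e^3$. $Z_n^{\mathcal{GS}}=\sum_{\bar\rho\in\mathcal{GS}_n}(-1)^{S(\bar\rho)}\alpha^{A(\bar\rho)}\beta^{B(\bar\rho)}\gamma^{C(\bar\rho)}$. For $\theta=(\theta_1,\theta_2)\in\{0,1\}^2$ the operator $K_\theta:\mathbb{M}_n\times\mathbb{M}_n\to\mathbb{C}$ is $K_\theta(x,x)=1$; $K_\theta(x,x+e^1)=\alpha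 e^{\pi i\theta_1/n}$ for $x$ black; $K_\theta(x,x+e^2)=\beta e^{\pi i\theta_2/n}$ for $x$ white; $K_\theta(x,x+e^3)=\gamma e^{\pi i(\theta_1+\theta_2)/(2n)}$; and $K_\theta(x,y)=0$ otherwise. *)

theory Defs
  imports Complex_Main "HOL-Combinatorics.Permutations"
begin

text \<open>Points of (1/2)Z^2 / nZ^2 are encoded in doubled coordinates, i.e. as integer pairs
  taken modulo 2n. A vertex v=(i,j) is (2i,2j); the black mid-edge v + e1/2 is (2i+1,2j);
  the white mid-edge v + e2/2 is (2i,2j+1).\<close>

type_synonym pt = "int \<times> int"

definition padd :: "nat \<Rightarrow> pt \<Rightarrow> pt \<Rightarrow> pt" where
  "padd n x y = ((fst x + fst y) mod (2 * int n), (snd x + snd y) mod (2 * int n))"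

definition e1 :: pt where "e1 = (2, 0)"
definition e2 :: pt where "e2 = (0, 2)"
definition e3 :: pt where "e3 = (1, 1)"

definition mids :: "nat \<Rightarrow> pt set" where
  "mids n = {(a, b). 0 \<le> a \<and> a < 2 * int n \<and> 0 \<le> b \<and> b < 2 * int n \<and> odd (a + b)}"

definition black :: "pt \<Rightarrow> bool" where
  "black x = odd (fst x)"

definition verts :: "nat \<Rightarrow> pt set" where
  "verts n = {(a, b). 0 \<le> a \<and> a < 2 * int n \<and> 0 \<le> b \<and> b < 2 * int n \<and> even a \<and> even b}"

definition GS :: "nat \<Rightarrow> (pt \<Rightarrow> pt) set" where
  "GS n = {\<rho>. \<rho> permutes mids n \<and>
     (\<forall>x \<in> mids n. (black x \<longrightarrow> \<rho> x \<in> {x, padd n x e3, padd n x e1}) \<and>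
                    (\<not> black x \<longrightarrow> \<rho> x \<in> {x, padd n x e3, padd n x e2}))}"

definition crossings :: "nat \<Rightarrow> (pt \<Rightarrow> pt) \<Rightarrow> nat" where
  "crossings n \<rho> = card {v \<in> verts n.
      \<rho> (padd n v (-1, 0)) = padd n v (1, 0) \<and> \<rho> (padd n v (0, -1)) = padd n v (0, 1)}"

definition cntA :: "nat \<Rightarrow> (pt \<Rightarrow> pt) \<Rightarrow> nat" where
  "cntA n \<rho> = card {x \<in> mids n. \<rho> x = padd n x e1}"
definition cntB :: "nat \<Rightarrow> (pt \<Rightarrow> pt) \<Rightarrow> nat" where
  "cntB n \<rho> = card {x \<in> mids n. \<rho> x = padd n x e2}"
definition cntC :: "nat \<Rightarrow> (pt \<Rightarrow> pt) \<Rightarrow> nat" where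
  "cntC n \<rho> = card {x \<in> mids n. \<rho> x = padd n x e3}"

definition Z_GS :: "nat \<Rightarrow> real \<Rightarrow> real \<Rightarrow> real \<Rightarrow> complex" where
  "Z_GS n \<alpha> \<beta> \<gamma> = (\<Sum>\<rho> \<in> GS n. (-1) ^ crossings n \<rho> *
      of_real (\<alpha> ^ cntA n \<rho> * \<beta> ^ cntB n \<rho> * \<gamma> ^ cntC n \<rho>))"

definition Kop :: "nat \<Rightarrow> real \<Rightarrow> real \<Rightarrow> real \<Rightarrow> nat \<Rightarrow> nat \<Rightarrow> pt \<Rightarrow> pt \<Rightarrow> complex" where
  "Kop n \<alpha> \<beta> \<gamma> t1 t2 x y =
     (if y = x then 1
      else if black x \<and> y = padd n x e1 then of_real \<alpha> * exp (pi * \<i> * of_nat t1 / of_nat n)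
      else if \<not> black x \<and> y = padd n x e2 then of_real \<beta> * exp (pi * \<i> * of_nat t2 / of_nat n)
      else if y = padd n x e3 then of_real \<gamma> * exp (pi * \<i> * of_nat (t1 + t2) / (2 * of_nat n))
      else 0)"

definition det_on :: "'a set \<Rightarrow> ('a \<Rightarrow> 'a \<Rightarrow> complex) \<Rightarrow> complex" where
  "det_on S M = (\<Sum>p \<in> {p. p permutes S}. of_int (sign p) * (\<Prod>x \<in> S. M x (p x)))"

end

theory Submission
  imports Defs "HOL-Library.Product_Lexorder"
begin

text \<open>Expanding \<open>det K\<^sub>\<theta>\<close>, only the permutations in \<open>GS\<^sub>n\<close> contribute. For such a \<open>\<rho>\<close> with
  horizontal and vertical winding numbers \<open>W\<close> and \<open>H\<close> one has \<open>2A + C = 2nW\<close> and \<open>2B + C = 2nH\<close>,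
  so the twisted weights of \<open>\<rho>\<close> give \<open>\<alpha>\<^sup>A \<beta>\<^sup>B \<gamma>\<^sup>C (-1)\<^bsup>\<theta>\<^sub>1W + \<theta>\<^sub>2H\<^esup>\<close>.
  The sign of \<open>\<rho>\<close> is computed by counting inversions for the order by diagonal level, then
  column. Every moved point goes up two levels, so an inversion is either a pair whose second
  point lies on the top level (which wraps to the bottom), \<open>(n - 1)m\<^sup>2\<close> of them for \<open>m = W + H\<close>
  points per level, or a pair on one level whose columns get exchanged. Such an exchange comes
  from a crossing or from exactly one of the two points wrapping around horizontally, and the
  wrap-arounds contribute \<open>W(m - 1)\<close> to the parity. Hence \<open>sign \<rho> = (-1)\<^bsup>(n-1)m\<^sup>2 + W(m-1) + S\<^esup>\<close>,
  and the average over \<open>\<theta>\<close> with the weights \<open>C\<^sub>\<theta>\<close> leaves exactly \<open>(-1)\<^sup>S\<close>.\<close>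

section \<open>Sign of a permutation by counting inversions\<close>

definition inversions :: "('a \<Rightarrow> 'b::linorder) \<Rightarrow> 'a set \<Rightarrow> ('a \<Rightarrow> 'a) \<Rightarrow> ('a \<times> 'a) set" where
  "inversions k X p = {(x, y) \<in> X \<times> X. k x < k y \<and> k (p y) < k (p x)}"

definition order_sign :: "('a \<Rightarrow> 'b::linorder) \<Rightarrow> 'a set \<Rightarrow> ('a \<Rightarrow> 'a) \<Rightarrow> int" where
  "order_sign k X p = (\<Prod>(x, y) \<in> {(x, y) \<in> X \<times> X. k x < k y}. if k (p x) < k (p y) then 1 else -1)"

lemma prod_if_one_minus_one:
  assumes "finite A"
  shows "(\<Prod>z\<in>A. if P z then 1 else -1 :: int) = (-1) ^ card {z \<in> A. \<not> P z}"
proof -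
  have "(\<Prod>z\<in>A. if P z then 1 else -1 :: int) = (\<Prod>z \<in> A \<inter> - {z. P z}. -1)"
    using prod.If_cases[OF assms, of P "\<lambda>_. 1" "\<lambda>_. -1"] by simp
  also have "A \<inter> - {z. P z} = {z \<in> A. \<not> P z}" by auto
  finally show ?thesis by simp
qed

lemma order_sign_eq_inversions:
  assumes "finite X" "inj_on k X" "p permutes X"
  shows "order_sign k X p = (-1) ^ card (inversions k X p)"
proof -
  let ?P = "{(x, y) \<in> X \<times> X. k x < k y}"
  have "finite ?P"
    using assms(1) by (auto intro: finite_subset[of _ "X \<times> X"])
  then have "order_sign k X p = (-1) ^ card {q \<in> ?P. \<not> k (p (fst q)) < k (p (snd q))}"
    unfolding order_sign_def split_def by (rule prod_if_one_minus_one)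
  moreover have "k (p x) \<noteq> k (p y)" if "x \<in> X" "y \<in> X" "x \<noteq> y" for x y
    using that assms(2,3) by (metis inj_onD permutes_in_image permutes_inj injD)
  then have "{q \<in> ?P. \<not> k (p (fst q)) < k (p (snd q))} = inversions k X p"
    unfolding inversions_def by fastforce
  ultimately show ?thesis by simp
qed

lemma prod_ordered_pairs_permute:
  fixes k :: "'a \<Rightarrow> 'b::linorder"
  assumes "finite X" "inj_on k X" "q permutes X"
    and sym: "\<And>a b. a \<in> X \<Longrightarrow> b \<in> X \<Longrightarrow> f a b = f b a"
  shows "(\<Prod>(x, y) \<in> {(x, y) \<in> X \<times> X. k x < k y}. f (q x) (q y)) =
         (\<Prod>(x, y) \<in> {(x, y) \<in> X \<times> X. k x < k y}. f x y)"
proof -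
  let ?P = "{(x, y) \<in> X \<times> X. k x < k y}"
  define sort where "sort = (\<lambda>(a, b). if k a < k b then (a, b) else (b, a))"
  have q_X: "q x \<in> X \<longleftrightarrow> x \<in> X" for x
    using assms(3) by (simp add: permutes_in_image)
  have k_q: "k (q x) \<noteq> k (q y)" if "x \<in> X" "y \<in> X" "x \<noteq> y" for x y
    using that assms(2,3) q_X by (metis inj_onD permutes_inj injD)
  have sort_in: "sort (q x, q y) \<in> ?P" if "(x, y) \<in> ?P" for x y
  proof -
    have "k (q x) \<noteq> k (q y)" using that k_q[of x y] by auto
    then show ?thesis using that q_X unfolding sort_def by (auto simp: linorder_neq_iff)
  qed
  have inj: "inj_on (\<lambda>(x, y). sort (q x, q y)) ?P"
  proof (rule inj_onI)
    fix z w assume zw: "z \<in> ?P" "w \<in> ?P" "(\<lambda>(x, y). sort (q x, q y)) z = (\<lambda>(x, y). sort (q x, q y)) w"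
    obtain x y x' y' where z: "z = (x, y)" and w: "w = (x', y')" by (cases z, cases w)
    have "{q x, q y} = {q x', q y'}" using zw(3) unfolding z w sort_def by (auto split: if_splits)
    then have "{x, y} = {x', y'}"
      using permutes_inj[OF assms(3)] by (metis doubleton_eq_iff injD)
    then show "z = w" using zw(1,2) unfolding z w by (auto simp: doubleton_eq_iff)
  qed
  moreover have "(\<lambda>(x, y). sort (q x, q y)) ` ?P = ?P"
  proof (rule card_subset_eq)
    show "finite ?P" using assms(1) by (auto intro: finite_subset[of _ "X \<times> X"])
    show "(\<lambda>(x, y). sort (q x, q y)) ` ?P \<subseteq> ?P" using sort_in by fastforce
    show "card ((\<lambda>(x, y). sort (q x, q y)) ` ?P) = card ?P" by (rule card_image) fact
  qed
  ultimately have bij: "bij_betw (\<lambda>(x, y). sort (q x, q y)) ?P ?P"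
    unfolding bij_betw_def by simp
  have "(\<Prod>(x, y) \<in> ?P. f (q x) (q y)) = (\<Prod>(x, y) \<in> ?P. (\<lambda>(a, b). f a b) (sort (q x, q y)))"
    using sym q_X by (intro prod.cong) (auto simp: sort_def)
  also have "\<dots> = (\<Prod>(x, y) \<in> ?P. f x y)"
    using prod.reindex_bij_betw[OF bij, of "\<lambda>(a, b). f a b"] by (simp add: case_prod_beta)
  finally show ?thesis .
qed

lemma order_sign_compose:
  fixes k :: "'a \<Rightarrow> 'b::linorder"
  assumes "finite X" "inj_on k X" "p permutes X" "q permutes X"
  shows "order_sign k X (p \<circ> q) = order_sign k X p * order_sign k X q"
proof -
  let ?P = "{(x, y) \<in> X \<times> X. k x < k y}"
  define s :: "'a \<Rightarrow> 'a \<Rightarrow> int" where "s a b = (if k a < k b then 1 else -1)" for a b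
  define t where "t a b = s (p a) (p b) * s a b" for a b
  \<comment> \<open>symmetric in \<open>a\<close> and \<open>b\<close>, so its product over ordered pairs is invariant under \<open>q\<close>\<close>
  have order_sign_s: "order_sign k X r = (\<Prod>(x, y) \<in> ?P. s (r x) (r y))" for r
    unfolding order_sign_def s_def ..
  have s_swap: "s b a = - s a b" if "k a \<noteq> k b" for a b
    using that unfolding s_def by auto
  have t_sym: "t a b = t b a" if "a \<in> X" "b \<in> X" for a b
  proof (cases "a = b")
    case False
    then have "k a \<noteq> k b" "k (p a) \<noteq> k (p b)"
      using that assms(2,3) by (metis inj_onD permutes_in_image permutes_inj injD)+
    then show ?thesis unfolding t_def using s_swap[of a b] s_swap[of "p a" "p b"] by simp
  qed simp
  have s_sq: "s a b * s a b = 1" for a b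
    unfolding s_def by simp
  have "order_sign k X (p \<circ> q) = (\<Prod>(x, y) \<in> ?P. t (q x) (q y) * s (q x) (q y))"
    unfolding order_sign_s t_def by (simp add: mult.assoc s_sq)
  also have "\<dots> = (\<Prod>(x, y) \<in> ?P. t (q x) (q y)) * order_sign k X q"
    unfolding order_sign_s prod.distrib[symmetric] by (simp add: split_def)
  also have "(\<Prod>(x, y) \<in> ?P. t (q x) (q y)) = (\<Prod>(x, y) \<in> ?P. t x y)"
    using assms(1,2,4) t_sym by (rule prod_ordered_pairs_permute)
  also have "\<dots> = order_sign k X p"
    unfolding order_sign_s t_def prod.distrib by (simp add: split_def s_def)
  finally show ?thesis .
qed

lemma order_sign_transpose:
  fixes k :: "'a \<Rightarrow> 'b::linorder"
  assumes "finite X" "inj_on k X" "a \<in> X" "b \<in> X" "a \<noteq> b"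
  shows "order_sign k X (transpose a b) = -1"
proof -
  have "k a \<noteq> k b" using assms(2-5) by (auto dest: inj_onD)
  moreover have "transpose a b = transpose b a" by (rule transpose_commute)
  ultimately obtain a' b' where ab': "transpose a' b' = transpose a b" "a' \<in> X" "b' \<in> X" "k a' < k b'"
    using assms(3,4) by (metis linorder_neq_iff)
  define between where "between = {z \<in> X. k a' < k z \<and> k z < k b'}"
  have k_inj: "k x \<noteq> k y" if "x \<in> X" "y \<in> X" "x \<noteq> y" for x y
    using assms(2) that by (auto dest: inj_onD)
  have "inversions k X (transpose a' b') = {(a', b')} \<union> {a'} \<times> between \<union> between \<times> {b'}"
  proof (rule set_eqI)
    fix z :: "'a \<times> 'a"
    obtain x y where z: "z = (x, y)" by (cases z)
    show "z \<in> inversions k X (transpose a' b') \<longleftrightarrow> z \<in> {(a', b')} \<union> {a'} \<times> between \<union> between \<times> {b'}"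
      unfolding z between_def inversions_def using ab'(2-4) k_inj[of a'] k_inj[of b'] k_inj[of x y]
      by (cases "x = a'"; cases "x = b'"; cases "y = a'"; cases "y = b'") auto
  qed
  moreover have "finite between" unfolding between_def using assms(1) by simp
  moreover have "(a', b') \<notin> {a'} \<times> between \<union> between \<times> {b'}" "{a'} \<times> between \<inter> between \<times> {b'} = {}"
    unfolding between_def by auto
  ultimately have "card (inversions k X (transpose a' b')) = 1 + 2 * card between"
    by (simp add: card_Un_disjoint card_cartesian_product)
  moreover have "transpose a' b' permutes X" using ab'(2,3) by (rule permutes_swap_id)
  ultimately show ?thesis using order_sign_eq_inversions[OF assms(1,2)] ab'(1) by simp
qed

theorem sign_eq_inversions:
  fixes k :: "'a \<Rightarrow> 'b::linorder"
  assumes "p permutes X" "finite X" "inj_on k X"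
  shows "sign p = (-1) ^ card (inversions k X p)"
proof -
  from assms(1,2) have "sign p = order_sign k X p"
  proof (induction rule: permutes_induct)
    case id
    have "inversions k X id = {}" unfolding inversions_def by auto
    then show ?case using order_sign_eq_inversions[OF assms(2,3) permutes_id] by (simp add: id_def)
  next
    case (swap a b p)
    have "transpose a b permutes X" using swap(1,2) by (rule permutes_swap_id)
    have "sign (transpose a b \<circ> p) = - sign p"
      using swap assms(2) by (metis sign_compose sign_swap_id permutes_imp_permutation permutation_swap_id mult_minus1)
    also have "\<dots> = order_sign k X (transpose a b) * order_sign k X p"
      using swap order_sign_transpose[OF assms(2,3) swap(1-3)] by simp
    also have "\<dots> = order_sign k X (transpose a b \<circ> p)"
      using order_sign_compose[OF assms(2,3) \<open>transpose a b permutes X\<close> swap(4)] by simp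
    finally show ?case .
  qed
  then show ?thesis using order_sign_eq_inversions[OF assms(2,3,1)] by simp
qed

lemma minus_one_power_add_cong:
  "(even c \<longleftrightarrow> even d) \<Longrightarrow> (-1 :: 'a::ring_1) ^ (a + c) = (-1) ^ (a + d)"
  by (simp add: power_add minus_one_power_iff)

lemma prod_power_of_bool:
  "finite A \<Longrightarrow> (\<Prod>x \<in> A. c ^ of_bool (P x)) = c ^ card {x \<in> A. P x}"
  by (simp add: power_sum[symmetric] Int_def conj_commute)

text \<open>Up to a factor independent of \<open>\<theta>\<close>, the summand is \<open>(-1)\<^bsup>(W + \<theta>\<^sub>2 + n + 1)(H + \<theta>\<^sub>1 + n + 1)\<^esup>/2\<close>,
  which is \<open>1/2\<close> for three values of \<open>\<theta>\<close> and \<open>-1/2\<close> for the fourth.\<close>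
lemma theta_sum:
  fixes n W H :: nat
  shows "(\<Sum>t1 \<in> {0, 1::nat}. \<Sum>t2 \<in> {0, 1::nat}.
      (1 / 2 * (-1) ^ ((t1 + n + 1) * (t2 + n + 1))) * (-1) ^ (t1 * W + t2 * H))
    = ((-1) ^ ((n + 1) * (W + H) + W * H) :: 'a::field_char_0)"
  by (cases "even n"; cases "even W"; cases "even H") (simp_all add: power_add power_mult_distrib minus_one_power_iff)

lemma even_inversion_parity:
  fixes n W H :: nat
  assumes "n > 0"
  shows "even ((n - 1) * (W + H) * (W + H) + W * (W + H - 1) + ((n + 1) * (W + H) + W * H))"
proof -
  obtain k where n: "n = Suc k" using assms by (cases n) auto
  show ?thesis
  proof (cases "W + H")
    case (Suc r)
    then show ?thesis unfolding n by (simp add: even_add even_mult_iff) presburger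
  qed simp
qed

lemma twisted_weights_power:
  fixes A B C W H t1 t2 n :: nat and \<alpha> \<beta> \<gamma> :: real
  assumes "n > 0" and horizontal: "2 * A + C = 2 * n * W" and vertical: "2 * B + C = 2 * n * H"
  shows "(of_real \<alpha> * exp (pi * \<i> * of_nat t1 / of_nat n)) ^ A *
         (of_real \<beta> * exp (pi * \<i> * of_nat t2 / of_nat n)) ^ B *
         (of_real \<gamma> * exp (pi * \<i> * of_nat (t1 + t2) / (2 * of_nat n))) ^ C
       = of_real (\<alpha> ^ A * \<beta> ^ B * \<gamma> ^ C) * (-1) ^ (t1 * W + t2 * H)"
proof -
  let ?z1 = "pi * \<i> * of_nat t1 / of_nat n" and ?z2 = "pi * \<i> * of_nat t2 / of_nat n"
    and ?z3 = "pi * \<i> * of_nat (t1 + t2) / (2 * of_nat n)"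
  have n: "(of_nat n :: complex) \<noteq> 0" using assms(1) by simp
  have "exp ?z1 ^ A * exp ?z2 ^ B * exp ?z3 ^ C = exp (of_nat A * ?z1 + of_nat B * ?z2 + of_nat C * ?z3)"
    by (simp only: exp_add exp_of_nat_mult)
  also have "of_nat A * ?z1 + of_nat B * ?z2 + of_nat C * ?z3
      = pi * \<i> * (of_nat t1 * (2 * of_nat A + of_nat C) + of_nat t2 * (2 * of_nat B + of_nat C))
        / (2 * of_nat n)"
    using n by (simp add: field_simps)
  also have "\<dots> = of_nat (t1 * W + t2 * H) * (of_real pi * \<i>)"
    using arg_cong[OF horizontal, of "of_nat :: nat \<Rightarrow> complex"]
      arg_cong[OF vertical, of "of_nat :: nat \<Rightarrow> complex"] n
    by (simp add: field_simps)
  also have "exp \<dots> = (-1) ^ (t1 * W + t2 * H)"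
    by (simp only: exp_of_nat_mult exp_pi_i)
  finally show ?thesis by (simp add: power_mult_distrib algebra_simps)
qed

section \<open>Mid-edges of the torus\<close>

lemma mod_add_small:
  fixes u k N :: int
  assumes "0 \<le> u" "u < N" "0 \<le> k" "k \<le> N"
  shows "(u + k) mod N = (if u + k < N then u + k else u + k - N)"
  using assms mod_pos_pos_trivial[of "u + k - N" N] by (auto simp: mod_eq_0_iff_dvd)

lemma mod_diff_one:
  fixes u N :: int
  assumes "0 \<le> u" "u < N"
  shows "(u - 1) mod N = (if u = 0 then N - 1 else u - 1)"
  using assms mod_pos_pos_trivial[of "N - 1" N] by auto

lemma mids_iff:
  "x \<in> mids n \<longleftrightarrow>
     0 \<le> fst x \<and> fst x < 2 * int n \<and> 0 \<le> snd x \<and> snd x < 2 * int n \<and> odd (fst x + snd x)"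
  by (cases x) (simp add: mids_def)

lemma verts_iff:
  "x \<in> verts n \<longleftrightarrow>
     0 \<le> fst x \<and> fst x < 2 * int n \<and> 0 \<le> snd x \<and> snd x < 2 * int n \<and> even (fst x) \<and> even (snd x)"
  by (cases x) (simp add: verts_def)

lemma fst_padd [simp]: "fst (padd n x y) = (fst x + fst y) mod (2 * int n)"
  and snd_padd [simp]: "snd (padd n x y) = (snd x + snd y) mod (2 * int n)"
  by (simp_all add: padd_def)

lemma finite_mids: "finite (mids n)"
  by (rule finite_subset[of _ "{0..<2 * int n} \<times> {0..<2 * int n}"]) (auto simp: mids_def)

lemma det_on_Kop_eq_sum_GS:
  "det_on (mids n) (Kop n \<alpha> \<beta> \<gamma> t1 t2) =
     (\<Sum>\<rho> \<in> GS n. of_int (sign \<rho>) * (\<Prod>x \<in> mids n. Kop n \<alpha> \<beta> \<gamma> t1 t2 x (\<rho> x)))"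
  unfolding det_on_def
proof (rule sum.mono_neutral_right)
  show "finite {p. p permutes mids n}" by (rule finite_permutations[OF finite_mids])
  show "GS n \<subseteq> {p. p permutes mids n}" unfolding GS_def by auto
  show "\<forall>p \<in> {p. p permutes mids n} - GS n.
      of_int (sign p) * (\<Prod>x \<in> mids n. Kop n \<alpha> \<beta> \<gamma> t1 t2 x (p x)) = 0"
  proof
    fix p assume "p \<in> {p. p permutes mids n} - GS n"
    then obtain x where "x \<in> mids n" "Kop n \<alpha> \<beta> \<gamma> t1 t2 x (p x) = 0"
      unfolding GS_def Kop_def by auto
    then show "of_int (sign p) * (\<Prod>x \<in> mids n. Kop n \<alpha> \<beta> \<gamma> t1 t2 x (p x)) = 0"
      using finite_mids by (metis mult_zero_right prod_zero_iff)
  qed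
qed

locale torus =
  fixes n :: nat
  assumes two_le_n: "2 \<le> n"
begin

abbreviation N :: int where "N \<equiv> 2 * int n"

lemma four_le_N: "4 \<le> N"
  using two_le_n by simp

definition square :: "pt set" where
  "square = {0..<N} \<times> {0..<N}"

lemma mids_subset_square: "mids n \<subseteq> square"
  by (auto simp: square_def mids_iff)

lemma padd_in_square: "padd n x u \<in> square"
  using four_le_N by (simp add: square_def mem_Times_iff)

lemma padd_padd: "padd n (padd n x u) w = padd n x (fst u + fst w, snd u + snd w)"
  by (simp add: padd_def mod_simps ac_simps)

lemma padd_zero: "x \<in> square \<Longrightarrow> padd n x (0, 0) = x"
  by (simp add: square_def padd_def mem_Times_iff prod_eq_iff)

definition level :: "pt \<Rightarrow> int" where
  "level x = (fst x + snd x) mod N"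

lemma level_padd: "level (padd n x u) = (level x + fst u + snd u) mod N"
proof -
  have "level (padd n x u) = ((fst x + snd x) + (fst u + snd u)) mod N"
    by (simp add: level_def mod_add_eq ac_simps)
  also have "\<dots> = (level x + (fst u + snd u)) mod N"
    unfolding level_def by (simp only: mod_add_left_eq)
  finally show ?thesis by (simp add: add.assoc)
qed

lemma level_fst_inj:
  assumes "x \<in> square" "y \<in> square" "level x = level y" "fst x = fst y"
  shows "x = y"
proof -
  have "snd x mod N = snd y mod N"
    using mod_diff_left_eq[of "fst x + snd x" N "fst x"] mod_diff_left_eq[of "fst x + snd y" N "fst x"]
      assms(3,4) unfolding level_def by simp
  with assms(1,2,4) show ?thesis
    by (simp add: square_def mem_Times_iff prod_eq_iff)
qed

lemma padd_e_distinct: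
  assumes "x \<in> mids n"
  shows "padd n x e1 \<noteq> x" "padd n x e2 \<noteq> x" "padd n x e3 \<noteq> x"
    "padd n x e1 \<noteq> padd n x e3" "padd n x e2 \<noteq> padd n x e3" "padd n x e1 \<noteq> padd n x e2"
  using assms four_le_N by (auto simp: prod_eq_iff mids_iff e1_def e2_def e3_def mod_add_small)

end

section \<open>Generalised snake configurations\<close>

locale snake = torus +
  fixes \<rho> :: "pt \<Rightarrow> pt"
  assumes snake: "\<rho> \<in> GS n"
begin

lemma rho_permutes_mids: "\<rho> permutes mids n"
  using snake by (simp add: GS_def)

definition moved :: "pt set" where
  "moved = {x \<in> mids n. \<rho> x \<noteq> x}"

lemma rho_permutes_moved: "\<rho> permutes moved"
  using rho_permutes_mids unfolding permutes_def moved_def by auto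

lemma finite_moved: "finite moved"
  unfolding moved_def using finite_mids by simp

lemma rho_in_moved: "x \<in> moved \<Longrightarrow> \<rho> x \<in> moved"
  by (simp add: permutes_in_image[OF rho_permutes_moved])

lemma moved_subset_square: "moved \<subseteq> square"
  using mids_subset_square by (auto simp: moved_def)

lemma moved_coords:
  assumes "x \<in> moved"
  shows "0 \<le> fst x" "fst x < N" "0 \<le> snd x" "snd x < N" "odd (fst x + snd x)"
  using assms by (auto simp: moved_def mids_iff)

definition step :: "pt \<Rightarrow> int" where
  "step x = (if \<rho> x = padd n x e1 then 2 else if \<rho> x = padd n x e3 then 1 else 0)"

lemma step_cases:
  assumes "x \<in> moved"
  obtains "step x = 2" "black x" "\<rho> x = padd n x e1"
    | "step x = 1" "\<rho> x = padd n x e3"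
    | "step x = 0" "\<not> black x" "\<rho> x = padd n x e2"
proof -
  have x: "x \<in> mids n" "\<rho> x \<noteq> x" using assms by (auto simp: moved_def)
  then have "black x \<Longrightarrow> \<rho> x \<in> {x, padd n x e3, padd n x e1}"
    and "\<not> black x \<Longrightarrow> \<rho> x \<in> {x, padd n x e3, padd n x e2}"
    using snake by (auto simp: GS_def)
  then show ?thesis
    using that x padd_e_distinct[OF x(1)] unfolding step_def by (cases "black x") auto
qed

lemma step_range: "x \<in> moved \<Longrightarrow> 0 \<le> step x \<and> step x \<le> 2"
  by (erule step_cases) auto

lemma rho_moved: "x \<in> moved \<Longrightarrow> \<rho> x = padd n x (step x, 2 - step x)"
  by (erule step_cases) (simp_all add: e1_def e2_def e3_def)

lemma rho_eq_padd_iff: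
  assumes "x \<in> mids n"
  shows "(\<rho> x = padd n x e1 \<longleftrightarrow> x \<in> moved \<and> step x = 2) \<and>
         (\<rho> x = padd n x e3 \<longleftrightarrow> x \<in> moved \<and> step x = 1) \<and>
         (\<rho> x = padd n x e2 \<longleftrightarrow> x \<in> moved \<and> step x = 0)"
proof (cases "x \<in> moved")
  case True
  with padd_e_distinct[OF assms] show ?thesis by (cases rule: step_cases[OF True]) auto
next
  case False
  with assms padd_e_distinct[OF assms] show ?thesis by (simp add: moved_def)
qed

lemma card_step_2: "cntA n \<rho> = card {x \<in> moved. step x = 2}"
  and card_step_1: "cntC n \<rho> = card {x \<in> moved. step x = 1}"
  and card_step_0: "cntB n \<rho> = card {x \<in> moved. step x = 0}"
proof -
  have "{x \<in> mids n. \<rho> x = padd n x e1} = {x \<in> moved. step x = 2}"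
    "{x \<in> mids n. \<rho> x = padd n x e3} = {x \<in> moved. step x = 1}"
    "{x \<in> mids n. \<rho> x = padd n x e2} = {x \<in> moved. step x = 0}"
    using rho_eq_padd_iff moved_def by blast+
  then show "cntA n \<rho> = card {x \<in> moved. step x = 2}" "cntC n \<rho> = card {x \<in> moved. step x = 1}"
    "cntB n \<rho> = card {x \<in> moved. step x = 0}"
    by (simp_all add: cntA_def cntB_def cntC_def)
qed

definition wraps :: "pt \<Rightarrow> bool" where
  "wraps x \<longleftrightarrow> N \<le> fst x + step x"

definition winding :: nat where
  "winding = card {x \<in> moved. wraps x}"

lemma fst_rho:
  assumes "x \<in> moved"
  shows "fst (\<rho> x) = fst x + step x - (if wraps x then N else 0)"
  using assms moved_coords[OF assms] step_range[OF assms] four_le_N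
  by (simp add: rho_moved wraps_def mod_add_small)

lemma sum_step: "(\<Sum>x \<in> moved. step x) = N * int winding"
proof -
  have "(\<Sum>x \<in> moved. fst x) = (\<Sum>x \<in> moved. fst (\<rho> x))"
    using sum.reindex_bij_betw[OF permutes_imp_bij[OF rho_permutes_moved], of fst] by simp
  also have "\<dots> = (\<Sum>x \<in> moved. fst x + step x - N * of_bool (wraps x))"
    by (rule sum.cong) (auto simp: fst_rho)
  also have "\<dots> = (\<Sum>x \<in> moved. fst x) + (\<Sum>x \<in> moved. step x) - N * (\<Sum>x \<in> moved. of_bool (wraps x))"
    by (simp only: sum.distrib sum_subtractf sum_distrib_left)
  finally show ?thesis
    using finite_moved by (simp add: winding_def Int_def conj_commute)
qed

lemma sum_step_counts: "(\<Sum>x \<in> moved. step x) = 2 * int (cntA n \<rho>) + int (cntC n \<rho>)"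
proof -
  have "(\<Sum>x \<in> moved. step x) = (\<Sum>x \<in> moved. 2 * of_bool (step x = 2) + of_bool (step x = 1))"
    by (rule sum.cong) (auto elim: step_cases)
  also have "\<dots> = 2 * (\<Sum>x \<in> moved. of_bool (step x = 2)) + (\<Sum>x \<in> moved. of_bool (step x = 1))"
    by (simp only: sum.distrib sum_distrib_left)
  finally show ?thesis
    using finite_moved by (simp add: card_step_2 card_step_1 Int_def conj_commute)
qed

lemma card_moved_counts: "card moved = cntA n \<rho> + cntB n \<rho> + cntC n \<rho>"
proof -
  have "card moved = (\<Sum>x \<in> moved. of_bool (step x = 2) + of_bool (step x = 0) + of_bool (step x = 1))"
    unfolding card_eq_sum by (rule sum.cong) (auto elim: step_cases)
  also have "\<dots> = (\<Sum>x \<in> moved. of_bool (step x = 2)) + (\<Sum>x \<in> moved. of_bool (step x = 0))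
      + (\<Sum>x \<in> moved. of_bool (step x = 1))"
    by (simp only: sum.distrib)
  finally show ?thesis
    using finite_moved by (simp add: card_step_2 card_step_1 card_step_0 Int_def conj_commute)
qed

lemma level_range: "x \<in> moved \<Longrightarrow> 0 \<le> level x \<and> level x < N \<and> odd (level x)"
  using moved_coords[of x] four_le_N unfolding level_def by (simp add: dvd_mod_iff)

lemma level_rho: "x \<in> moved \<Longrightarrow> level (\<rho> x) = (level x + 2) mod N"
  by (simp add: rho_moved level_padd)

definition level_set :: "int \<Rightarrow> pt set" where
  "level_set c = {x \<in> moved. level x = c}"

lemma bij_betw_level_set:
  assumes "0 \<le> c" "c < N"
  shows "bij_betw \<rho> (level_set c) (level_set ((c + 2) mod N))"
proof -
  have level_c: "level x = c" if "x \<in> moved" "(level x + 2) mod N = (c + 2) mod N" for x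
    using that level_range[OF that(1)] assms four_le_N by (simp add: mod_add_small split: if_splits)
  have "\<rho> ` level_set c = level_set ((c + 2) mod N)"
  proof
    show "\<rho> ` level_set c \<subseteq> level_set ((c + 2) mod N)"
      using level_rho rho_in_moved unfolding level_set_def by auto
    show "level_set ((c + 2) mod N) \<subseteq> \<rho> ` level_set c"
    proof
      fix y assume y: "y \<in> level_set ((c + 2) mod N)"
      then have "y \<in> \<rho> ` moved"
        using permutes_image[OF rho_permutes_moved] by (simp add: level_set_def)
      then obtain x where "x \<in> moved" "y = \<rho> x" by blast
      with y show "y \<in> \<rho> ` level_set c"
        using level_c by (auto simp: level_set_def level_rho)
    qed
  qed
  moreover have "inj_on \<rho> (level_set c)"
    using permutes_inj[OF rho_permutes_moved] by (auto intro: inj_on_subset)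
  ultimately show ?thesis unfolding bij_betw_def by simp
qed

definition level_size :: nat where
  "level_size = card (level_set 1)"

lemma card_level_set: "j < n \<Longrightarrow> card (level_set (2 * int j + 1)) = level_size"
proof (induction j)
  case (Suc j)
  have "card (level_set (2 * int j + 1)) = card (level_set ((2 * int j + 1 + 2) mod N))"
    by (rule bij_betw_same_card[OF bij_betw_level_set]) (use Suc.prems in auto)
  also have "(2 * int j + 1 + 2) mod N = 2 * int (Suc j) + 1"
    using Suc.prems by simp
  finally show ?case using Suc by simp
qed (simp add: level_size_def)

lemma level_eq_odd:
  assumes "x \<in> moved"
  obtains j where "j < n" "level x = 2 * int j + 1"
proof -
  obtain c where c: "level x = 2 * c + 1" using level_range[OF assms] by (meson oddE)
  then have "0 \<le> c" "c < int n" using level_range[OF assms] by auto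
  then show ?thesis using that[of "nat c"] c by auto
qed

lemma card_level_set_level: "x \<in> moved \<Longrightarrow> card (level_set (level x)) = level_size"
  by (elim level_eq_odd) (simp add: card_level_set)

lemma card_moved: "card moved = n * level_size"
proof -
  have "moved = (\<Union>j < n. level_set (2 * int j + 1))"
    by (auto simp: level_set_def elim: level_eq_odd)
  then have "card moved = card (\<Union>j < n. level_set (2 * int j + 1))" by simp
  also have "\<dots> = (\<Sum>j < n. card (level_set (2 * int j + 1)))"
    by (rule card_UN_disjoint) (use finite_moved in \<open>auto simp: level_set_def\<close>)
  finally show ?thesis by (simp add: card_level_set)
qed

lemma horizontal_count: "2 * cntA n \<rho> + cntC n \<rho> = 2 * n * winding"
proof -
  have "int (2 * cntA n \<rho> + cntC n \<rho>) = int (2 * n * winding)"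
    using sum_step sum_step_counts by simp
  then show ?thesis by (simp only: of_nat_eq_iff)
qed

lemma winding_le_level_size: "winding \<le> level_size"
  and vertical_count: "2 * cntB n \<rho> + cntC n \<rho> = 2 * n * (level_size - winding)"
proof -
  have "int (2 * cntB n \<rho> + cntC n \<rho>) = 2 * int (card moved) - int (2 * cntA n \<rho> + cntC n \<rho>)"
    by (simp add: card_moved_counts)
  also have "\<dots> = 2 * int n * (int level_size - int winding)"
    by (simp only: card_moved horizontal_count) (simp add: algebra_simps)
  finally have *: "int (2 * cntB n \<rho> + cntC n \<rho>) = 2 * int n * (int level_size - int winding)" .
  then have "0 \<le> 2 * int n * (int level_size - int winding)" by linarith
  then show le: "winding \<le> level_size"
    using two_le_n by (simp add: zero_le_mult_iff)
  have "int (2 * cntB n \<rho> + cntC n \<rho>) = int (2 * n * (level_size - winding))"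
    using * le by (simp add: of_nat_diff)
  then show "2 * cntB n \<rho> + cntC n \<rho> = 2 * n * (level_size - winding)"
    by (simp only: of_nat_eq_iff)
qed

section \<open>Inversions and crossings\<close>

lemma level_rho_if:
  assumes "x \<in> moved"
  shows "level (\<rho> x) = (if level x = N - 1 then 1 else level x + 2)"
proof -
  have "even (N - 2)" by simp
  then have "level x \<noteq> N - 2" using level_range[OF assms] by metis
  then show ?thesis
    using level_rho[OF assms] level_range[OF assms] four_le_N by (auto simp: mod_add_small)
qed

text \<open>In this lexicographic order \<open>\<rho>\<close> is monotone between different levels below the top one,
  since it raises every level by \<open>2\<close>.\<close>
definition key :: "pt \<Rightarrow> int \<times> int" where
  "key x = (level x, fst x)"

lemma inj_on_key: "inj_on key moved"
proof (rule inj_onI)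
  fix x y assume "x \<in> moved" "y \<in> moved" "key x = key y"
  then show "x = y" using moved_subset_square by (intro level_fst_inj) (auto simp: key_def)
qed

definition same_level_pairs :: "(pt \<times> pt) set" where
  "same_level_pairs = {(x, y) \<in> moved \<times> moved. level x = level y \<and> fst x < fst y}"

lemma finite_same_level_pairs: "finite same_level_pairs"
  using finite_moved unfolding same_level_pairs_def by (auto intro: finite_subset[of _ "moved \<times> moved"])

lemma inversions_key:
  "inversions key moved \<rho> =
     (moved - level_set (N - 1)) \<times> level_set (N - 1) \<union>
     {(x, y) \<in> same_level_pairs. fst (\<rho> y) < fst (\<rho> x)}"
proof (intro set_eqI)
  fix z :: "pt \<times> pt"
  obtain x y where z: "z = (x, y)" by (cases z)
  show "z \<in> inversions key moved \<rho> \<longleftrightarrow>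
    z \<in> (moved - level_set (N - 1)) \<times> level_set (N - 1) \<union> {(x, y) \<in> same_level_pairs. fst (\<rho> y) < fst (\<rho> x)}"
  proof (cases "x \<in> moved \<and> y \<in> moved")
    case True
    then have x: "x \<in> moved" and y: "y \<in> moved" by auto
    note ranges = level_range[OF x] level_range[OF y]
    consider "level x = level y" | "level x < level y" | "level y < level x" by linarith
    then show ?thesis
    proof cases
      case 1
      then show ?thesis
        using x y unfolding z inversions_def key_def same_level_pairs_def level_set_def
        by (auto simp: level_rho_if)
    next
      case 2
      then have "level x \<noteq> N - 1" using ranges by simp
      then show ?thesis
        using 2 x y ranges unfolding z inversions_def key_def same_level_pairs_def level_set_def
        by (auto simp: level_rho_if)
    next
      case 3
      then show ?thesis
        using x y ranges unfolding z inversions_def key_def same_level_pairs_def level_set_def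
        by auto
    qed
  qed (auto simp: z inversions_def same_level_pairs_def level_set_def)
qed

lemma card_cross_level_inversions:
  "card ((moved - level_set (N - 1)) \<times> level_set (N - 1)) = (n - 1) * level_size * level_size"
proof -
  have "N - 1 = 2 * int (n - 1) + 1" using two_le_n by simp
  then have top: "card (level_set (N - 1)) = level_size"
    using two_le_n card_level_set[of "n - 1"] by simp
  have "level_set (N - 1) \<subseteq> moved" unfolding level_set_def by auto
  then have "card (moved - level_set (N - 1)) = (n - 1) * level_size"
    using finite_moved top card_moved by (simp add: card_Diff_subset finite_subset diff_mult_distrib)
  with top show ?thesis by (simp add: card_cartesian_product)
qed

text \<open>For \<open>(x, y) \<in> same_level_pairs\<close>, \<open>crosses x y\<close> holds exactly when \<open>x\<close> and \<open>y\<close> are the two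
  mid-edges entering a crossing vertex, the left one moving by \<open>e1\<close> and the lower one by \<open>e2\<close>.\<close>
definition crosses :: "pt \<Rightarrow> pt \<Rightarrow> bool" where
  "crosses x y \<longleftrightarrow> fst y + step y < fst x + step x \<or> fst x + step x + N < fst y + step y"

lemma rho_flips_iff:
  assumes "(x, y) \<in> same_level_pairs"
  shows "fst (\<rho> y) < fst (\<rho> x) \<longleftrightarrow> (wraps x \<noteq> wraps y) \<noteq> crosses x y"
proof -
  have x: "x \<in> moved" and y: "y \<in> moved" and "level x = level y" "fst x < fst y"
    using assms by (auto simp: same_level_pairs_def)
  moreover have "\<rho> x \<noteq> \<rho> y"
    using \<open>fst x < fst y\<close> permutes_inj[OF rho_permutes_moved] by (metis injD less_irrefl)
  ultimately have "fst (\<rho> x) \<noteq> fst (\<rho> y)"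
    using level_fst_inj[of "\<rho> x" "\<rho> y"] moved_subset_square rho_in_moved[OF x] rho_in_moved[OF y]
      level_rho[OF x] level_rho[OF y] by auto
  then show ?thesis
    using fst_rho[OF x] fst_rho[OF y] moved_coords[OF x] moved_coords[OF y] step_range[OF x] step_range[OF y]
      \<open>fst x < fst y\<close> four_le_N
    unfolding crosses_def wraps_def by (auto split: if_splits)
qed

lemma sum_wraps_same_level_pairs:
  "(\<Sum>(x, y) \<in> same_level_pairs. of_bool (wraps x) + of_bool (wraps y)) = winding * (level_size - 1)"
proof -
  define swapped where "swapped = prod.swap ` same_level_pairs"
  have disjoint: "same_level_pairs \<inter> swapped = {}"
    unfolding same_level_pairs_def swapped_def by auto
  have "fst x < fst y \<or> fst y < fst x" if "x \<in> moved" "y \<in> moved" "level y = level x" "y \<noteq> x" for x y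
    using level_fst_inj[of x y] that moved_subset_square by fastforce
  then have partners: "same_level_pairs \<union> swapped = Sigma moved (\<lambda>x. level_set (level x) - {x})"
    unfolding same_level_pairs_def swapped_def level_set_def by (auto simp: image_iff; blast)
  have "(\<Sum>(x, y) \<in> same_level_pairs. of_bool (wraps x) + of_bool (wraps y))
      = (\<Sum>(x, y) \<in> same_level_pairs. of_bool (wraps x)) + (\<Sum>(x, y) \<in> same_level_pairs. of_bool (wraps y) :: nat)"
    by (simp add: split_def sum.distrib)
  also have "(\<Sum>(x, y) \<in> same_level_pairs. of_bool (wraps y)) = (\<Sum>(x, y) \<in> swapped. of_bool (wraps x) :: nat)"
    unfolding swapped_def by (subst sum.reindex) (auto simp: inj_on_def)
  also have "(\<Sum>(x, y) \<in> same_level_pairs. of_bool (wraps x)) + \<dots>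
      = (\<Sum>(x, y) \<in> same_level_pairs \<union> swapped. of_bool (wraps x) :: nat)"
    using finite_same_level_pairs disjoint by (simp add: sum.union_disjoint swapped_def)
  also have "\<dots> = (\<Sum>x \<in> moved. \<Sum>y \<in> level_set (level x) - {x}. of_bool (wraps x))"
    unfolding partners using finite_moved by (subst sum.Sigma) (auto simp: level_set_def)
  also have "\<dots> = (\<Sum>x \<in> moved. of_bool (wraps x) * (level_size - 1))"
    using card_level_set_level by (intro sum.cong) (auto simp: level_set_def)
  also have "\<dots> = winding * (level_size - 1)"
    using finite_moved by (simp add: winding_def sum_distrib_right[symmetric] Int_def conj_commute)
  finally show ?thesis .
qed

definition crossing_vertices :: "pt set" where
  "crossing_vertices = {v \<in> verts n.
     \<rho> (padd n v (-1, 0)) = padd n v (1, 0) \<and> \<rho> (padd n v (0, -1)) = padd n v (0, 1)}"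

definition crossing_pairs :: "(pt \<times> pt) set" where
  "crossing_pairs = {(x, y) \<in> same_level_pairs. crosses x y}"

lemma crossing_pair_cases:
  assumes "(x, y) \<in> crossing_pairs"
  obtains "step x = 2" "step y = 0" "fst y = fst x + 1"
    | "step x = 0" "step y = 2" "fst x = 0" "fst y = N - 1"
proof -
  have x: "x \<in> moved" and y: "y \<in> moved" and "fst x < fst y" "crosses x y"
    using assms by (auto simp: crossing_pairs_def same_level_pairs_def)
  then show ?thesis
    using that moved_coords[OF x] moved_coords[OF y] step_range[OF x] step_range[OF y]
    unfolding crosses_def by linarith
qed

text \<open>The mid-edges left of and below a vertex \<open>v\<close>, ordered by column: on the column
  \<open>fst v = 0\<close> the left one has column \<open>N - 1\<close>.\<close>
definition pair_at :: "pt \<Rightarrow> pt \<times> pt" where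
  "pair_at v = (if fst v = 0 then (padd n v (0, -1), padd n v (-1, 0)) else (padd n v (-1, 0), padd n v (0, -1)))"

definition vertex_at :: "pt \<times> pt \<Rightarrow> pt" where
  "vertex_at q = padd n (if step (fst q) = 2 then fst q else snd q) (1, 0)"

lemma crossing_vertex_neighbours:
  assumes "v \<in> crossing_vertices"
  shows "padd n v (-1, 0) \<in> moved" "step (padd n v (-1, 0)) = 2"
    and "padd n v (0, -1) \<in> moved" "step (padd n v (0, -1)) = 0"
proof -
  have v: "v \<in> verts n" "\<rho> (padd n v (-1, 0)) = padd n (padd n v (-1, 0)) e1"
    "\<rho> (padd n v (0, -1)) = padd n (padd n v (0, -1)) e2"
    using assms by (simp_all add: crossing_vertices_def padd_padd e1_def e2_def)
  have "padd n v (-1, 0) \<in> mids n" "padd n v (0, -1) \<in> mids n"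
    using v(1) padd_in_square[of v] four_le_N
    by (auto simp: mids_iff verts_iff square_def mem_Times_iff dvd_mod_iff mod_pos_pos_trivial)
  then show "padd n v (-1, 0) \<in> moved" "step (padd n v (-1, 0)) = 2"
    and "padd n v (0, -1) \<in> moved" "step (padd n v (0, -1)) = 0"
    using v(2,3) rho_eq_padd_iff by blast+
qed

lemma pair_at_crossing_vertex:
  assumes "v \<in> crossing_vertices"
  shows "pair_at v \<in> crossing_pairs \<and> vertex_at (pair_at v) = v"
proof -
  let ?L = "padd n v (-1, 0)" and ?D = "padd n v (0, -1)"
  note nb = crossing_vertex_neighbours[OF assms]
  have v: "0 \<le> fst v" "fst v < N" "v \<in> square"
    using assms by (auto simp: crossing_vertices_def verts_iff square_def mem_Times_iff)
  have fst_L: "fst ?L = (if fst v = 0 then N - 1 else fst v - 1)"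
    using v by (simp add: mod_diff_one)
  have fst_D: "fst ?D = fst v"
    using v by (simp add: mod_pos_pos_trivial)
  have "level ?L = level ?D" by (simp add: level_padd)
  then have "pair_at v \<in> crossing_pairs"
    using nb v fst_L fst_D
    by (auto simp: pair_at_def crossing_pairs_def same_level_pairs_def crosses_def)
  moreover have "vertex_at (pair_at v) = padd n ?L (1, 0)"
    using nb by (simp add: pair_at_def vertex_at_def)
  moreover have "padd n ?L (1, 0) = v"
    using v by (simp add: padd_padd padd_zero)
  ultimately show ?thesis by simp
qed

lemma vertex_at_crossing_pair:
  assumes q: "q \<in> crossing_pairs"
  shows "vertex_at q \<in> crossing_vertices \<and> pair_at (vertex_at q) = q"
proof -
  obtain x y where q_xy: "q = (x, y)" by (cases q)
  with q have x: "x \<in> moved" and y: "y \<in> moved" and "level x = level y" "fst x < fst y"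
    by (auto simp: crossing_pairs_def same_level_pairs_def)
  from q have shape: "step x = 2 \<and> step y = 0 \<and> fst y = fst x + 1 \<or>
      step x = 0 \<and> step y = 2 \<and> fst x = 0 \<and> fst y = N - 1"
    unfolding q_xy by (cases rule: crossing_pair_cases) auto
  define b where "b = (if step x = 2 then x else y)"
  define w where "w = (if step x = 2 then y else x)"
  define v where "v = padd n b (1, 0)"
  have b: "b \<in> moved" "step b = 2" and w: "w \<in> moved" "step w = 0" "level w = level b"
    using shape x y \<open>level x = level y\<close> by (auto simp: b_def w_def)
  have fst_v: "fst v = fst w"
    using shape moved_coords[OF y] by (auto simp: v_def b_def w_def)
  have "black b" using b by (auto elim: step_cases)
  then have "odd (fst b)" "even (snd b)" using moved_coords[OF b(1)] by (auto simp: black_def)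
  moreover have "v \<in> square" unfolding v_def by (rule padd_in_square)
  ultimately have "v \<in> verts n"
    using moved_coords[OF b(1)] dvd_mod_iff[of 2 N "fst b + 1"]
    by (simp add: v_def verts_iff square_def mem_Times_iff mod_pos_pos_trivial)
  have L: "padd n v (-1, 0) = b"
    using b moved_subset_square by (auto simp: v_def padd_padd padd_zero)
  have D: "padd n v (0, -1) = w"
  proof (rule level_fst_inj)
    show "padd n v (0, -1) \<in> square" "w \<in> square" using w moved_subset_square padd_in_square by auto
    show "level (padd n v (0, -1)) = level w"
      using w level_range[OF b(1)] by (simp add: v_def padd_padd level_padd mod_pos_pos_trivial)
    show "fst (padd n v (0, -1)) = fst w"
      using fst_v \<open>v \<in> verts n\<close> by (simp add: verts_iff mod_pos_pos_trivial)
  qed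
  have "\<rho> (padd n v (-1, 0)) = padd n v (1, 0)"
    unfolding L using rho_moved[OF b(1)] b(2) by (simp add: v_def padd_padd)
  moreover have "\<rho> (padd n v (0, -1)) = padd n v (0, 1)"
  proof -
    have "padd n v (0, 1) = padd n (padd n v (0, -1)) (0, 2)" by (simp add: padd_padd)
    then show ?thesis unfolding D using rho_moved[OF w(1)] w(2) by simp
  qed
  ultimately have "v \<in> crossing_vertices"
    using \<open>v \<in> verts n\<close> by (simp add: crossing_vertices_def)
  moreover have "pair_at v = q"
    using shape \<open>fst x < fst y\<close> moved_coords[OF x]
    by (auto simp: pair_at_def L D fst_v q_xy b_def w_def)
  moreover have "vertex_at q = v" by (simp add: vertex_at_def q_xy b_def v_def)
  ultimately show ?thesis by simp
qed

lemma card_crossing_pairs: "card crossing_pairs = crossings n \<rho>"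
proof -
  have "bij_betw vertex_at crossing_pairs crossing_vertices"
    using pair_at_crossing_vertex vertex_at_crossing_pair by (intro bij_betw_byWitness[where f' = pair_at]) auto
  then show ?thesis
    unfolding crossings_def crossing_vertices_def by (simp add: bij_betw_same_card)
qed

lemma even_card_flipped_pairs:
  "even (card {(x, y) \<in> same_level_pairs. fst (\<rho> y) < fst (\<rho> x)}) \<longleftrightarrow>
     even (winding * (level_size - 1) + crossings n \<rho>)"
proof -
  define f :: "pt \<times> pt \<Rightarrow> nat" where
    "f = (\<lambda>(x, y). of_bool (wraps x) + of_bool (wraps y) + of_bool (crosses x y))"
  have "{(x, y) \<in> same_level_pairs. fst (\<rho> y) < fst (\<rho> x)} = {q \<in> same_level_pairs. odd (f q)}"
    using rho_flips_iff by (auto simp: f_def)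
  moreover have "sum f same_level_pairs = winding * (level_size - 1) + card crossing_pairs"
    using finite_same_level_pairs sum_wraps_same_level_pairs
    by (simp add: f_def split_def sum.distrib crossing_pairs_def Int_def conj_commute case_prod_unfold)
  ultimately show ?thesis
    using even_sum_iff[OF finite_same_level_pairs, of f] card_crossing_pairs by simp
qed

lemma sign_rho:
  "sign \<rho> = (-1) ^ ((n - 1) * level_size * level_size + winding * (level_size - 1) + crossings n \<rho>)"
proof -
  let ?cross = "(moved - level_set (N - 1)) \<times> level_set (N - 1)"
    and ?flipped = "{(x, y) \<in> same_level_pairs. fst (\<rho> y) < fst (\<rho> x)}"
  have "finite ?cross" using finite_moved by (auto simp: level_set_def)
  moreover have "finite ?flipped" by (rule finite_subset[OF _ finite_same_level_pairs]) auto
  moreover have "?cross \<inter> ?flipped = {}"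
    by (auto simp: level_set_def same_level_pairs_def)
  ultimately have "card (inversions key moved \<rho>) = (n - 1) * level_size * level_size + card ?flipped"
    by (simp add: inversions_key card_Un_disjoint card_cross_level_inversions)
  then have "sign \<rho> = (-1) ^ ((n - 1) * level_size * level_size + card ?flipped)"
    using sign_eq_inversions[OF rho_permutes_moved finite_moved inj_on_key] by simp
  also have "\<dots> = (-1) ^ ((n - 1) * level_size * level_size + (winding * (level_size - 1) + crossings n \<rho>))"
    using even_card_flipped_pairs by (rule minus_one_power_add_cong)
  finally show ?thesis by (simp add: add.assoc)
qed

lemma prod_Kop_rho:
  "(\<Prod>x \<in> mids n. Kop n \<alpha> \<beta> \<gamma> t1 t2 x (\<rho> x)) =
     (of_real \<alpha> * exp (pi * \<i> * of_nat t1 / of_nat n)) ^ cntA n \<rho> *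
     (of_real \<beta> * exp (pi * \<i> * of_nat t2 / of_nat n)) ^ cntB n \<rho> *
     (of_real \<gamma> * exp (pi * \<i> * of_nat (t1 + t2) / (2 * of_nat n))) ^ cntC n \<rho>"
proof -
  define a where "a = of_real \<alpha> * exp (pi * \<i> * of_nat t1 / of_nat n)"
  define b where "b = of_real \<beta> * exp (pi * \<i> * of_nat t2 / of_nat n)"
  define c where "c = of_real \<gamma> * exp (pi * \<i> * of_nat (t1 + t2) / (2 * of_nat n))"
  have "Kop n \<alpha> \<beta> \<gamma> t1 t2 x (\<rho> x) =
      a ^ of_bool (\<rho> x = padd n x e1) * b ^ of_bool (\<rho> x = padd n x e2) * c ^ of_bool (\<rho> x = padd n x e3)"
    if "x \<in> mids n" for x
    using snake that padd_e_distinct[OF that]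
    by (cases "black x") (auto simp: GS_def Kop_def a_def b_def c_def)
  then have "(\<Prod>x \<in> mids n. Kop n \<alpha> \<beta> \<gamma> t1 t2 x (\<rho> x)) =
      (\<Prod>x \<in> mids n. a ^ of_bool (\<rho> x = padd n x e1)) * (\<Prod>x \<in> mids n. b ^ of_bool (\<rho> x = padd n x e2))
      * (\<Prod>x \<in> mids n. c ^ of_bool (\<rho> x = padd n x e3))"
    by (simp add: prod.distrib)
  then show ?thesis
    by (simp add: prod_power_of_bool finite_mids cntA_def cntB_def cntC_def a_def b_def c_def)
qed

lemma theta_sum_rho:
  "(\<Sum>t1 \<in> {0, 1::nat}. \<Sum>t2 \<in> {0, 1::nat}.
       (1 / 2 * (-1) ^ ((t1 + n + 1) * (t2 + n + 1))) *
       (of_int (sign \<rho>) * (\<Prod>x \<in> mids n. Kop n \<alpha> \<beta> \<gamma> t1 t2 x (\<rho> x))))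
   = (-1) ^ crossings n \<rho> * of_real (\<alpha> ^ cntA n \<rho> * \<beta> ^ cntB n \<rho> * \<gamma> ^ cntC n \<rho>)"
proof -
  define W where "W = winding"
  define H where "H = level_size - winding"
  define weight :: complex where "weight = of_real (\<alpha> ^ cntA n \<rho> * \<beta> ^ cntB n \<rho> * \<gamma> ^ cntC n \<rho>)"
  have m: "level_size = W + H"
    using winding_le_level_size by (simp add: W_def H_def)
  have K: "(\<Prod>x \<in> mids n. Kop n \<alpha> \<beta> \<gamma> t1 t2 x (\<rho> x)) = weight * (-1) ^ (t1 * W + t2 * H)" for t1 t2
    unfolding prod_Kop_rho weight_def W_def H_def
    using two_le_n horizontal_count vertical_count by (intro twisted_weights_power) auto
  have "of_int (sign \<rho>) * (-1) ^ ((n + 1) * (W + H) + W * H) =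
      ((-1) ^ ((n - 1) * (W + H) * (W + H) + W * (W + H - 1) + ((n + 1) * (W + H) + W * H)) :: complex)
        * (-1) ^ crossings n \<rho>"
    unfolding sign_rho m by (simp add: power_add ac_simps W_def)
  also have "\<dots> = (-1) ^ crossings n \<rho>"
    using even_inversion_parity[of n W H] two_le_n by simp
  finally have sign: "of_int (sign \<rho>) * (-1) ^ ((n + 1) * (W + H) + W * H) = ((-1) ^ crossings n \<rho> :: complex)" .
  have "(\<Sum>t1 \<in> {0, 1::nat}. \<Sum>t2 \<in> {0, 1::nat}.
       (1 / 2 * (-1) ^ ((t1 + n + 1) * (t2 + n + 1))) *
       (of_int (sign \<rho>) * (\<Prod>x \<in> mids n. Kop n \<alpha> \<beta> \<gamma> t1 t2 x (\<rho> x))))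
    = of_int (sign \<rho>) * weight * (\<Sum>t1 \<in> {0, 1::nat}. \<Sum>t2 \<in> {0, 1::nat}.
       (1 / 2 * (-1) ^ ((t1 + n + 1) * (t2 + n + 1))) * (-1) ^ (t1 * W + t2 * H))"
    unfolding K sum_distrib_left by (simp only: ac_simps)
  also have "\<dots> = (-1) ^ crossings n \<rho> * weight"
    unfolding theta_sum using sign by (simp add: ac_simps)
  finally show ?thesis unfolding weight_def .
qed

end

theorem theorem3p1:
  fixes n :: nat and \<alpha> \<beta> \<gamma> :: real
  assumes "\<alpha> > 0" "\<beta> > 0" "\<gamma> > 0" "n \<ge> 2"
  shows "Z_GS n \<alpha> \<beta> \<gamma> =
    (\<Sum>t1 \<in> {0, 1::nat}. \<Sum>t2 \<in> {0, 1::nat}.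
       (1 / 2 * (-1) ^ ((t1 + n + 1) * (t2 + n + 1))) * det_on (mids n) (Kop n \<alpha> \<beta> \<gamma> t1 t2))"
proof -
  have "(\<Sum>t1 \<in> {0, 1::nat}. \<Sum>t2 \<in> {0, 1::nat}.
       (1 / 2 * (-1) ^ ((t1 + n + 1) * (t2 + n + 1))) * det_on (mids n) (Kop n \<alpha> \<beta> \<gamma> t1 t2))
    = (\<Sum>\<rho> \<in> GS n. \<Sum>t1 \<in> {0, 1::nat}. \<Sum>t2 \<in> {0, 1::nat}.
       (1 / 2 * (-1) ^ ((t1 + n + 1) * (t2 + n + 1))) *
       (of_int (sign \<rho>) * (\<Prod>x \<in> mids n. Kop n \<alpha> \<beta> \<gamma> t1 t2 x (\<rho> x))))"
    unfolding det_on_Kop_eq_sum_GS sum_distrib_left by (simp only: sum.swap[of _ "GS n"])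
  also have "\<dots> = (\<Sum>\<rho> \<in> GS n. (-1) ^ crossings n \<rho> *
      of_real (\<alpha> ^ cntA n \<rho> * \<beta> ^ cntB n \<rho> * \<gamma> ^ cntC n \<rho>))"
    using assms(4)
    by (intro sum.cong refl snake.theta_sum_rho) (auto intro: snake.intro torus.intro snake_axioms.intro)
  finally show ?thesis unfolding Z_GS_def ..
qed

end
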